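(* In the standing setting, $g(Q)=Q'$, i.e. $\{g(A): A\in Q\}$ equals the set of nonempty down-sets of $(P',\preceq')$.
   Context: Standing setting: $(P,\preceq)$ is a finite poset with a bottom and a top element; $f:P\to P'$ is a surjective map onto $P'=f(P)$; $f^{-1}(a')=\{a\in P: f(a)=a'\}$; the relation $\preceq'$ on $P'$ is defined by $b'\preceq' a'$ iff there exist $a\in f^{-1}(a')$, $b\in f^{-1}(b')$ with $b\preceq a$. Assume the three conditions: (D) for all $a',b'\in P'$ with $b'\preceq' a'$ and every $a\in f^{-1}(a')$ there is $b\in f^{-1}(b')$ with $b\preceq a$; (U) for all $a',b'\in P'$ with $b'\preceq' a'$ and every $b\in f^{-1}(b')$ there is $a\in f^{-1}(a')$ with $b\preceq a$; (S) for all $a,b,c\in P$, if $c\preceq b\preceq a$ and $f(c)=f(a)$ then $f(b)=f(a)$. (Then $(P',\preceq')$ is a poset.) A down-set of a poset is a subset $A$ such that $a\in A$ and $b\preceq a$ imply $b\in A$. $Q$ is the set of nonempty down-sets of $(P,\preceq)$ and $Q'$ the set of nonempty down-sets of $(P',\preceq')$, each ordered by inclusion. $g:2^P\to 2^{P'}$ is $g(A)=\{f(a):a\in A\}$; we write $g(Q)=\{g(A):A\in Q\}$. *)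

theory Defs
  imports Main
begin

definition partial_order_on_set :: "'a set \<Rightarrow> ('a \<Rightarrow> 'a \<Rightarrow> bool) \<Rightarrow> bool" where
  "partial_order_on_set P le \<longleftrightarrow>
     (\<forall>a\<in>P. le a a) \<and>
     (\<forall>a\<in>P. \<forall>b\<in>P. le a b \<and> le b a \<longrightarrow> a = b) \<and>
     (\<forall>a\<in>P. \<forall>b\<in>P. \<forall>c\<in>P. le a b \<and> le b c \<longrightarrow> le a c)"

definition has_bottom :: "'a set \<Rightarrow> ('a \<Rightarrow> 'a \<Rightarrow> bool) \<Rightarrow> bool" where
  "has_bottom P le \<longleftrightarrow> (\<exists>z\<in>P. \<forall>a\<in>P. le z a)"

definition has_top :: "'a set \<Rightarrow> ('a \<Rightarrow> 'a \<Rightarrow> bool) \<Rightarrow> bool" where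
  "has_top P le \<longleftrightarrow> (\<exists>t\<in>P. \<forall>a\<in>P. le a t)"

definition induced_le :: "'a set \<Rightarrow> ('a \<Rightarrow> 'a \<Rightarrow> bool) \<Rightarrow> ('a \<Rightarrow> 'b) \<Rightarrow> 'b \<Rightarrow> 'b \<Rightarrow> bool" where
  "induced_le P le f b' a' \<longleftrightarrow> (\<exists>a\<in>P. \<exists>b\<in>P. f a = a' \<and> f b = b' \<and> le b a)"

definition down_set :: "'a set \<Rightarrow> ('a \<Rightarrow> 'a \<Rightarrow> bool) \<Rightarrow> 'a set \<Rightarrow> bool" where
  "down_set P le A \<longleftrightarrow> A \<subseteq> P \<and> (\<forall>a\<in>A. \<forall>b\<in>P. le b a \<longrightarrow> b \<in> A)"

definition nonempty_down_sets :: "'a set \<Rightarrow> ('a \<Rightarrow> 'a \<Rightarrow> bool) \<Rightarrow> 'a set set" where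
  "nonempty_down_sets P le = {A. down_set P le A \<and> A \<noteq> {}}"

end

theory Submission
  imports Defs
begin

text \<open>Only the lifting property (D) is needed: it makes images of down-sets down-sets, while
  preimages of down-sets are down-sets for any map, and every down-set of the image poset is the
  image of its own preimage.\<close>

lemma down_set_image_induced:
  assumes lift: "\<And>a b'. a \<in> P \<Longrightarrow> b' \<in> f ` P \<Longrightarrow> induced_le P le f b' (f a) \<Longrightarrow>
                   \<exists>b\<in>P. f b = b' \<and> le b a"
    and A: "down_set P le A"
  shows "down_set (f ` P) (induced_le P le f) (f ` A)"
  unfolding down_set_def
proof (intro conjI ballI impI)
  show "f ` A \<subseteq> f ` P"
    using A unfolding down_set_def by blast
next
  fix a' b' assume "a' \<in> f ` A" and b': "b' \<in> f ` P" and "induced_le P le f b' a'"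
  then obtain a where a: "a \<in> A" "a' = f a" and "induced_le P le f b' (f a)"
    by blast
  moreover have "a \<in> P"
    using A a unfolding down_set_def by blast
  ultimately obtain b where "b \<in> P" "f b = b'" "le b a"
    using lift b' by blast
  with A a show "b' \<in> f ` A"
    unfolding down_set_def by blast
qed

lemma down_set_vimage_induced:
  assumes "down_set (f ` P) (induced_le P le f) B"
  shows "down_set P le (P \<inter> f -` B)"
  using assms unfolding down_set_def induced_le_def by blast

theorem lemma4:
  fixes P :: "'a set" and le :: "'a \<Rightarrow> 'a \<Rightarrow> bool" and f :: "'a \<Rightarrow> 'b"
  assumes fin: "finite P"
    and po: "partial_order_on_set P le"
    and bot: "has_bottom P le"
    and top: "has_top P le"
    and D: "\<forall>a'\<in>f ` P. \<forall>b'\<in>f ` P. induced_le P le f b' a' \<longrightarrow>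
              (\<forall>a\<in>P. f a = a' \<longrightarrow> (\<exists>b\<in>P. f b = b' \<and> le b a))"
    and U: "\<forall>a'\<in>f ` P. \<forall>b'\<in>f ` P. induced_le P le f b' a' \<longrightarrow>
              (\<forall>b\<in>P. f b = b' \<longrightarrow> (\<exists>a\<in>P. f a = a' \<and> le b a))"
    and S: "\<forall>a\<in>P. \<forall>b\<in>P. \<forall>c\<in>P. le c b \<and> le b a \<and> f c = f a \<longrightarrow> f b = f a"
  shows "(\<lambda>A. f ` A) ` nonempty_down_sets P le
           = nonempty_down_sets (f ` P) (induced_le P le f)"
proof
  have lift: "\<exists>b\<in>P. f b = b' \<and> le b a"
    if "a \<in> P" "b' \<in> f ` P" "induced_le P le f b' (f a)" for a b'
    using D that by blast
  show "(\<lambda>A. f ` A) ` nonempty_down_sets P le \<subseteq> nonempty_down_sets (f ` P) (induced_le P le f)"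
    using down_set_image_induced[where f = f and P = P and le = le, OF lift]
    unfolding nonempty_down_sets_def by blast
next
  show "nonempty_down_sets (f ` P) (induced_le P le f) \<subseteq> (\<lambda>A. f ` A) ` nonempty_down_sets P le"
  proof
    fix B assume "B \<in> nonempty_down_sets (f ` P) (induced_le P le f)"
    then have B: "down_set (f ` P) (induced_le P le f) B" "B \<noteq> {}"
      unfolding nonempty_down_sets_def by auto
    then have "f ` (P \<inter> f -` B) = B"
      unfolding down_set_def by blast
    with B down_set_vimage_induced[OF B(1)]
    show "B \<in> (\<lambda>A. f ` A) ` nonempty_down_sets P le"
      unfolding nonempty_down_sets_def by blast
  qed
qed

end
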